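(* Let $G$ and $H$ be two connected graphs of order $n$ with equal Laplacian spectrum. If $Z(G)\neq Z(H)$, then for every $k\geq 1$, $\vee_k G$ and $\vee_k H$ have equal Laplacian spectrum and $Z(\vee_k G)\neq Z(\vee_k H)$. Likewise, if $Z_{-}(G)\neq Z_{-}(H)$, then for every $k\geq 1$, $\vee_k G$ and $\vee_k H$ have equal Laplacian spectrum and $Z_{-}(\vee_k G)\neq Z_{-}(\vee_k H)$.
   Context: Graphs are finite, simple, undirected. The Laplacian matrix of $G$ is $L=D-A$ ($D$ the diagonal degree matrix, $A$ the adjacency matrix). The join $G\vee H$ is the disjoint union of $G$ and $H$ together with all edges $\{u,v\}$, $u\in V(G)$, $v\in V(H)$. For a connected graph $G$, define $\vee_0 G=G$ and $\vee_{k+1}G=(\vee_k G)\vee G$ for $k\geq 0$ (using a fresh copy of $G$ each time). The zero forcing number $Z(G)$ is the minimum size of a set $S\subseteq V(G)$ such that, if the vertices of $S$ are colored blue and all others white, repeated application of the rule "a blue vertex with exactly one white neighbor forces that neighbor to become blue" eventually makes every vertex blue. The skew zero forcing number $Z_{-}(G)$ is defined in the same way but with the rule "any vertex (blue or white) that has exactly one white neighbor forces that neighbor to become blue". *)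

theory Defs
  imports "HOL-Computational_Algebra.Polynomial" "HOL-Combinatorics.Permutations"
begin

type_synonym 'a graph = "'a set \<times> 'a set set"

definition verts :: "'a graph \<Rightarrow> 'a set" where "verts G = fst G"
definition edges :: "'a graph \<Rightarrow> 'a set set" where "edges G = snd G"

definition simple_graph :: "'a graph \<Rightarrow> bool" where
  "simple_graph G \<longleftrightarrow> finite (verts G) \<and>
     (\<forall>e\<in>edges G. \<exists>u v. e = {u, v} \<and> u \<noteq> v \<and> u \<in> verts G \<and> v \<in> verts G)"

definition adj :: "'a graph \<Rightarrow> 'a \<Rightarrow> 'a \<Rightarrow> bool" where
  "adj G u v \<longleftrightarrow> {u, v} \<in> edges G"

definition nbhd :: "'a graph \<Rightarrow> 'a \<Rightarrow> 'a set" where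
  "nbhd G u = {v \<in> verts G. adj G u v}"

definition connected_graph :: "'a graph \<Rightarrow> bool" where
  "connected_graph G \<longleftrightarrow> simple_graph G \<and> verts G \<noteq> {} \<and>
     (\<forall>u\<in>verts G. \<forall>v\<in>verts G. (u, v) \<in> {(x, y). adj G x y}\<^sup>*)"

definition degree :: "'a graph \<Rightarrow> 'a \<Rightarrow> nat" where
  "degree G v = card (nbhd G v)"

definition laplacian :: "'a graph \<Rightarrow> 'a \<Rightarrow> 'a \<Rightarrow> real" where
  "laplacian G u v = (if u = v then real (degree G u) else if adj G u v then -1 else 0)"

text \<open>Characteristic polynomial det(xI - M) of a matrix indexed by a finite set V
  (Leibniz formula).\<close>
definition charpoly_on :: "'a set \<Rightarrow> ('a \<Rightarrow> 'a \<Rightarrow> real) \<Rightarrow> real poly" where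
  "charpoly_on V M = (\<Sum>p \<in> {p. p permutes V}. of_int (sign p) *
      (\<Prod>v\<in>V. (if v = p v then [:0, 1:] else 0) - [:M v (p v):]))"

definition lap_spectrum :: "'a graph \<Rightarrow> real multiset" where
  "lap_spectrum G = proots (charpoly_on (verts G) (laplacian G))"

text \<open>Join of two graphs with disjoint vertex sets.\<close>
definition graph_join :: "'a graph \<Rightarrow> 'a graph \<Rightarrow> 'a graph" where
  "graph_join G H = (verts G \<union> verts H,
     edges G \<union> edges H \<union> {{u, v} | u v. u \<in> verts G \<and> v \<in> verts H})"

definition graph_copy :: "nat \<Rightarrow> 'a graph \<Rightarrow> (nat \<times> 'a) graph" where
  "graph_copy i G = ((\<lambda>v. (i, v)) ` verts G, (\<lambda>e. (\<lambda>v. (i, v)) ` e) ` edges G)"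

text \<open>Iterated join: \<vee>_0 G = G, \<vee>_{k+1} G = (\<vee>_k G) \<vee> G (fresh copy each time).\<close>
fun iter_join :: "nat \<Rightarrow> 'a graph \<Rightarrow> (nat \<times> 'a) graph" where
  "iter_join 0 G = graph_copy 0 G"
| "iter_join (Suc k) G = graph_join (iter_join k G) (graph_copy (Suc k) G)"

definition zf_step :: "'a graph \<Rightarrow> 'a set \<Rightarrow> 'a set \<Rightarrow> bool" where
  "zf_step G B B' \<longleftrightarrow> (\<exists>u w. u \<in> B \<and> {x \<in> nbhd G u. x \<notin> B} = {w} \<and> B' = insert w B)"

definition szf_step :: "'a graph \<Rightarrow> 'a set \<Rightarrow> 'a set \<Rightarrow> bool" where
  "szf_step G B B' \<longleftrightarrow> (\<exists>u w. u \<in> verts G \<and> {x \<in> nbhd G u. x \<notin> B} = {w} \<and> B' = insert w B)"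

definition zero_forcing_set :: "'a graph \<Rightarrow> 'a set \<Rightarrow> bool" where
  "zero_forcing_set G S \<longleftrightarrow> S \<subseteq> verts G \<and> (zf_step G)\<^sup>*\<^sup>* S (verts G)"

definition skew_zero_forcing_set :: "'a graph \<Rightarrow> 'a set \<Rightarrow> bool" where
  "skew_zero_forcing_set G S \<longleftrightarrow> S \<subseteq> verts G \<and> (szf_step G)\<^sup>*\<^sup>* S (verts G)"

definition Z :: "'a graph \<Rightarrow> nat" where
  "Z G = (LEAST k. \<exists>S. zero_forcing_set G S \<and> card S = k)"

definition Zskew :: "'a graph \<Rightarrow> nat" where
  "Zskew G = (LEAST k. \<exists>S. skew_zero_forcing_set G S \<and> card S = k)"

end

(* Both invariants of an iterated join are computed from those of the graph being joined.

   Laplacian spectrum: since L has zero row sums, subtracting one row from all others splits off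
   the eigenvalue 0, L(G) having characteristic polynomial x q_G(x). For the join of G and H, with
   |G| = a and |H| = b, the same manipulation yields a block triangular matrix and gives
   x (x - a - b) q_G(x - b) q_H(x - a), so cospectral graphs of equal order have cospectral
   iterated joins.

   Zero forcing (for either rule), when neither graph has isolated vertices: a forcing set S of
   G \<or> H either contains one side, say H, and then S \<inter> G forces G; or its first force is made by
   a vertex of G whose only white neighbour lies in H, and then S misses exactly one vertex of H
   while one neighbour of the forcing vertex can be dropped from S \<inter> G. Hence
   Z(G \<or> H) = min (Z(G) + |H|) (Z(H) + |G|), and Z(\<vee>_k G) = k |G| + Z(G).
   A connected graph on n \<ge> 2 vertices has no isolated vertex; for n = 1 both numbers are 1. *)

theory Submission
  imports Defs "Jordan_Normal_Form.Char_Poly"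
begin

section \<open>Graphs, relabelling and joins\<close>

lemma simple_graph_finite: "simple_graph G \<Longrightarrow> finite (verts G)"
  by (simp add: simple_graph_def)

lemma simple_graph_edge_subset: "simple_graph G \<Longrightarrow> e \<in> edges G \<Longrightarrow> e \<subseteq> verts G"
  unfolding simple_graph_def by fastforce

lemma simple_graph_adjD:
  assumes "simple_graph G" and "adj G u v"
  shows "u \<in> verts G" and "v \<in> verts G" and "u \<noteq> v"
proof -
  from assms obtain a b where "{u, v} = {a, b}" "a \<noteq> b" "a \<in> verts G" "b \<in> verts G"
    unfolding simple_graph_def adj_def by blast
  then show "u \<in> verts G" "v \<in> verts G" "u \<noteq> v"
    by (auto simp: doubleton_eq_iff)
qed

lemma adj_commute: "adj G u v \<longleftrightarrow> adj G v u"
  by (simp add: adj_def insert_commute)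

lemma nbhd_subset_verts: "nbhd G u \<subseteq> verts G"
  by (auto simp: nbhd_def)

definition no_isolated_vertices :: "'a graph \<Rightarrow> bool" where
  "no_isolated_vertices G \<longleftrightarrow> (\<forall>v\<in>verts G. nbhd G v \<noteq> {})"

lemma connected_graph_no_isolated_vertices:
  assumes conn: "connected_graph G" and two: "2 \<le> card (verts G)"
  shows "no_isolated_vertices G"
  unfolding no_isolated_vertices_def
proof
  fix v assume v: "v \<in> verts G"
  have simple: "simple_graph G"
    using conn by (simp add: connected_graph_def)
  obtain a b where "a \<in> verts G" "b \<in> verts G" "a \<noteq> b"
    using two card_le_Suc0_iff_eq[OF simple_graph_finite[OF simple]] by auto
  then obtain y where y: "y \<in> verts G" "y \<noteq> v"
    by metis
  then have "(v, y) \<in> {(x, y). adj G x y}\<^sup>*"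
    using conn v by (auto simp: connected_graph_def)
  then obtain z where "adj G v z"
    using y(2) by (auto elim: converse_rtranclE)
  then have "z \<in> nbhd G v"
    using simple_graph_adjD(2)[OF simple] by (simp add: nbhd_def)
  then show "nbhd G v \<noteq> {}"
    by blast
qed

definition map_graph :: "('a \<Rightarrow> 'b) \<Rightarrow> 'a graph \<Rightarrow> 'b graph" where
  "map_graph f G = (f ` verts G, image f ` edges G)"

lemma verts_map_graph [simp]: "verts (map_graph f G) = f ` verts G"
  by (simp add: map_graph_def verts_def)

lemma edges_map_graph [simp]: "edges (map_graph f G) = image f ` edges G"
  by (simp add: map_graph_def edges_def)

lemma graph_copy_eq_map_graph: "graph_copy i G = map_graph (Pair i) G"
  by (simp add: graph_copy_def map_graph_def)

lemma map_graph_snd_graph_copy: "map_graph snd (graph_copy i G) = G"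
  by (simp add: graph_copy_eq_map_graph map_graph_def image_image verts_def edges_def)

lemma verts_graph_copy: "verts (graph_copy i G) = {i} \<times> verts G"
  by (auto simp: graph_copy_eq_map_graph)

context
  fixes f :: "'a \<Rightarrow> 'b" and G :: "'a graph"
  assumes inj: "inj_on f (verts G)" and simple: "simple_graph G"
begin

lemma adj_map_graph:
  assumes "u \<in> verts G" and "v \<in> verts G"
  shows "adj (map_graph f G) (f u) (f v) \<longleftrightarrow> adj G u v"
proof -
  have "edges G \<subseteq> Pow (verts G)"
    using simple_graph_edge_subset[OF simple] by auto
  then have "image f {u, v} \<in> image f ` edges G \<longleftrightarrow> {u, v} \<in> edges G"
    using inj_on_image_Pow[OF inj] assms by (intro inj_on_image_mem_iff) auto
  then show ?thesis
    by (simp add: adj_def)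
qed

lemma simple_graph_map_graph: "simple_graph (map_graph f G)"
  using simple inj unfolding simple_graph_def inj_on_def by fastforce

lemma nbhd_map_graph: "u \<in> verts G \<Longrightarrow> nbhd (map_graph f G) (f u) = f ` nbhd G u"
  by (auto simp: nbhd_def adj_map_graph)

lemma no_isolated_vertices_map_graph:
  "no_isolated_vertices G \<Longrightarrow> no_isolated_vertices (map_graph f G)"
  by (auto simp: no_isolated_vertices_def nbhd_map_graph)

end

lemma simple_graph_graph_copy: "simple_graph G \<Longrightarrow> simple_graph (graph_copy i G)"
  by (simp add: graph_copy_eq_map_graph simple_graph_map_graph inj_on_def)

lemma card_verts_graph_copy: "card (verts (graph_copy i G)) = card (verts G)"
  by (simp add: verts_graph_copy card_cartesian_product)

lemma verts_graph_join: "verts (graph_join A B) = verts A \<union> verts B"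
  by (simp add: graph_join_def verts_def)

lemma edges_graph_join:
  "edges (graph_join A B) = edges A \<union> edges B \<union> {{u, v} | u v. u \<in> verts A \<and> v \<in> verts B}"
  by (simp add: graph_join_def edges_def verts_def)

lemma graph_join_commute: "graph_join A B = graph_join B A"
proof -
  have "{{u, v} | u v. u \<in> verts A \<and> v \<in> verts B} = {{u, v} | u v. u \<in> verts B \<and> v \<in> verts A}"
    by (auto simp: insert_commute)
  then show ?thesis
    by (simp add: graph_join_def Un_ac)
qed

lemma adj_graph_join:
  "adj (graph_join A B) u v \<longleftrightarrow> adj A u v \<or> adj B u v \<or>
     (u \<in> verts A \<and> v \<in> verts B) \<or> (u \<in> verts B \<and> v \<in> verts A)"
  by (auto simp: adj_def edges_graph_join doubleton_eq_iff)

locale disjoint_simple_graphs =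
  fixes A B :: "'a graph"
  assumes simple_A: "simple_graph A" and simple_B: "simple_graph B"
    and disjoint: "verts A \<inter> verts B = {}"
begin

lemma swap: "disjoint_simple_graphs B A"
  using simple_A simple_B disjoint by unfold_locales auto

lemma finite_A: "finite (verts A)" and finite_B: "finite (verts B)"
  using simple_A simple_B by (simp_all add: simple_graph_finite)

lemma adj_graph_join_left: "u \<in> verts A \<Longrightarrow> v \<in> verts A \<Longrightarrow> adj (graph_join A B) u v \<longleftrightarrow> adj A u v"
  using disjoint simple_graph_adjD[OF simple_B, of u v] by (auto simp: adj_graph_join)

lemma nbhd_graph_join_left: "u \<in> verts A \<Longrightarrow> nbhd (graph_join A B) u = nbhd A u \<union> verts B"
  using disjoint simple_graph_adjD[OF simple_A, of u] simple_graph_adjD[OF simple_B, of u]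
  by (auto simp: nbhd_def verts_graph_join adj_graph_join)

lemma simple_graph_join: "simple_graph (graph_join A B)"
proof -
  have "\<exists>u v. e = {u, v} \<and> u \<noteq> v \<and> u \<in> verts A \<union> verts B \<and> v \<in> verts A \<union> verts B"
    if "e \<in> edges (graph_join A B)" for e
    using that simple_A simple_B disjoint unfolding edges_graph_join simple_graph_def by fastforce
  then show ?thesis
    using finite_A finite_B by (simp add: simple_graph_def verts_graph_join)
qed

lemma no_isolated_vertices_join:
  assumes "no_isolated_vertices A" and "no_isolated_vertices B"
  shows "no_isolated_vertices (graph_join A B)"
proof -
  interpret swapped: disjoint_simple_graphs B A by (rule swap)
  show ?thesis
    using assms nbhd_graph_join_left swapped.nbhd_graph_join_left graph_join_commute[of A B]
    by (auto simp: no_isolated_vertices_def verts_graph_join)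
qed

end

lemma verts_iter_join: "verts (iter_join k G) = {..k} \<times> verts G"
  by (induction k) (auto simp: verts_graph_join verts_graph_copy)

lemma card_verts_iter_join:
  "finite (verts G) \<Longrightarrow> card (verts (iter_join k G)) = Suc k * card (verts G)"
  by (simp add: verts_iter_join card_cartesian_product)

lemma disjoint_simple_graphs_iter_join:
  "simple_graph (iter_join k G) \<Longrightarrow> simple_graph G \<Longrightarrow>
     disjoint_simple_graphs (iter_join k G) (graph_copy (Suc k) G)"
  by unfold_locales (auto simp: simple_graph_graph_copy verts_iter_join verts_graph_copy)

lemma simple_graph_iter_join: "simple_graph G \<Longrightarrow> simple_graph (iter_join k G)"
  by (induction k)
    (simp_all add: simple_graph_graph_copy disjoint_simple_graphs.simple_graph_join
      disjoint_simple_graphs_iter_join)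

lemma no_isolated_vertices_graph_copy:
  "simple_graph G \<Longrightarrow> no_isolated_vertices G \<Longrightarrow> no_isolated_vertices (graph_copy i G)"
  by (simp add: graph_copy_eq_map_graph no_isolated_vertices_map_graph inj_on_def)

lemma no_isolated_vertices_iter_join:
  "simple_graph G \<Longrightarrow> no_isolated_vertices G \<Longrightarrow> no_isolated_vertices (iter_join k G)"
  by (induction k) (simp_all add: no_isolated_vertices_graph_copy simple_graph_iter_join
      disjoint_simple_graphs.no_isolated_vertices_join disjoint_simple_graphs_iter_join)

section \<open>Zero forcing\<close>

definition force_step :: "bool \<Rightarrow> 'a graph \<Rightarrow> 'a set \<Rightarrow> 'a set \<Rightarrow> bool" where
  "force_step skew G B B' \<longleftrightarrow>
     (\<exists>u w. u \<in> (if skew then verts G else B) \<and> nbhd G u - B = {w} \<and> B' = insert w B)"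

definition forcing_set :: "bool \<Rightarrow> 'a graph \<Rightarrow> 'a set \<Rightarrow> bool" where
  "forcing_set skew G S \<longleftrightarrow> S \<subseteq> verts G \<and> (force_step skew G)\<^sup>*\<^sup>* S (verts G)"

definition forcing_number :: "bool \<Rightarrow> 'a graph \<Rightarrow> nat" where
  "forcing_number skew G = (LEAST k. \<exists>S. forcing_set skew G S \<and> card S = k)"

lemma Z_eq_forcing_number: "Z G = forcing_number False G"
proof -
  have "zf_step G = force_step False G"
    by (auto simp: fun_eq_iff zf_step_def force_step_def set_diff_eq)
  then show ?thesis
    by (simp add: Z_def forcing_number_def zero_forcing_set_def forcing_set_def)
qed

lemma Zskew_eq_forcing_number: "Zskew G = forcing_number True G"
proof -
  have "szf_step G = force_step True G"
    by (auto simp: fun_eq_iff szf_step_def force_step_def set_diff_eq)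
  then show ?thesis
    by (simp add: Zskew_def forcing_number_def skew_zero_forcing_set_def forcing_set_def)
qed

lemma force_stepI:
  "nbhd G u - B = {w} \<Longrightarrow> u \<in> (if skew then verts G else B) \<Longrightarrow> force_step skew G B (insert w B)"
  unfolding force_step_def by blast

lemma force_stepE:
  assumes "force_step skew G B B'"
  obtains u w where "u \<in> (if skew then verts G else B)" and "nbhd G u - B = {w}" and "B' = insert w B"
  using assms unfolding force_step_def by blast

lemma forced_vertex_in_nbhd:
  assumes "nbhd G u - B = {w}"
  shows "w \<in> nbhd G u" and "w \<notin> B"
  using assms by auto

lemma forced_vertexD:
  assumes "simple_graph G" and "nbhd G u - B = {w}"
  shows "adj G u w" and "u \<in> verts G" and "w \<in> verts G"
proof -
  show "adj G u w"
    using forced_vertex_in_nbhd(1)[OF assms(2)] by (simp add: nbhd_def)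
  then show "u \<in> verts G" "w \<in> verts G"
    using simple_graph_adjD[OF assms(1)] by auto
qed

lemma force_steps_subset: "(force_step skew G)\<^sup>*\<^sup>* X Y \<Longrightarrow> X \<subseteq> Y"
  by (induction rule: rtranclp_induct) (auto elim: force_stepE)

lemma force_steps_subset_verts:
  assumes "(force_step skew G)\<^sup>*\<^sup>* X Y" and "X \<subseteq> verts G"
  shows "Y \<subseteq> verts G"
  using assms
proof (induction rule: rtranclp_induct)
  case (step Y Y')
  from step.hyps(2) obtain u w where "nbhd G u - Y = {w}" and "Y' = insert w Y"
    by (rule force_stepE)
  then show ?case
    using step.IH step.prems forced_vertex_in_nbhd(1) nbhd_subset_verts[of G u] by auto
qed

lemma forcing_number_le: "forcing_set skew G S \<Longrightarrow> forcing_number skew G \<le> card S"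
  unfolding forcing_number_def by (rule Least_le) blast

lemma forcing_number_obtain:
  obtains S where "forcing_set skew G S" and "card S = forcing_number skew G"
proof -
  have "forcing_set skew G (verts G)"
    by (simp add: forcing_set_def)
  then have "\<exists>k S. forcing_set skew G S \<and> card S = k"
    by blast
  from LeastI_ex[OF this] show ?thesis
    using that unfolding forcing_number_def by blast
qed

lemma forcing_number_singleton:
  assumes simple: "simple_graph G" and single: "verts G = {v}"
  shows "forcing_number skew G = 1"
proof (rule antisym)
  show "forcing_number skew G \<le> 1"
    using forcing_number_le[of skew G "verts G"] single by (simp add: forcing_set_def)
  obtain S where S: "forcing_set skew G S" "card S = forcing_number skew G"
    by (rule forcing_number_obtain)
  have "S \<noteq> {}"
  proof
    assume "S = {}"
    then have "(force_step skew G)\<^sup>*\<^sup>* {} {v}"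
      using S(1) single by (simp add: forcing_set_def)
    then obtain B' where "force_step skew G {} B'"
      by (auto elim: converse_rtranclpE)
    then obtain u w where "nbhd G u - {} = {w}"
      by (rule force_stepE)
    then have "adj G u w"
      by (rule forced_vertexD(1)[OF simple])
    then show False
      using simple_graph_adjD[OF simple] single by fastforce
  qed
  then have "S = {v}"
    using S(1) single by (auto simp: forcing_set_def)
  then show "1 \<le> forcing_number skew G"
    using S(2) by simp
qed

lemma forcing_set_remove_neighbour:
  assumes simple: "simple_graph G" and S: "forcing_set skew G S"
    and u: "u \<in> (if skew then verts G else S)" and blue: "nbhd G u \<subseteq> S" and v: "v \<in> nbhd G u"
  shows "forcing_set skew G (S - {v})"
proof -
  have "v \<noteq> u"
    using v simple_graph_adjD(3)[OF simple] by (auto simp: nbhd_def)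
  then have "force_step skew G (S - {v}) (insert v (S - {v}))"
    using u blue v by (intro force_stepI) auto
  then show ?thesis
    using S blue v by (auto simp: forcing_set_def insert_absorb intro: converse_rtranclp_into_rtranclp)
qed

context
  fixes f :: "'a \<Rightarrow> 'b" and G :: "'a graph"
  assumes inj: "inj_on f (verts G)" and simple: "simple_graph G"
begin

lemma force_step_map_graph:
  assumes "Y \<subseteq> verts G" and "force_step skew G Y Y'"
  shows "force_step skew (map_graph f G) (f ` Y) (f ` Y')"
proof -
  obtain u w where u: "u \<in> (if skew then verts G else Y)" and w: "nbhd G u - Y = {w}"
    and Y': "Y' = insert w Y"
    using assms(2) by (rule force_stepE)
  have uG: "u \<in> verts G"
    using forced_vertexD(2)[OF simple w] .
  have "f ` (nbhd G u - Y) = f ` nbhd G u - f ` Y"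
    using nbhd_subset_verts[of G u] assms(1) by (intro inj_on_image_set_diff[OF inj]) auto
  then have "nbhd (map_graph f G) (f u) - f ` Y = {f w}"
    using w by (simp add: nbhd_map_graph[OF inj simple uG])
  moreover have "f u \<in> (if skew then verts (map_graph f G) else f ` Y)"
    using u by auto
  ultimately show ?thesis
    unfolding Y' image_insert by (rule force_stepI)
qed

lemma forcing_set_map_graph:
  assumes "forcing_set skew G S"
  shows "forcing_set skew (map_graph f G) (f ` S)"
proof -
  have "(force_step skew (map_graph f G))\<^sup>*\<^sup>* (f ` S) (f ` Y)"
    if "(force_step skew G)\<^sup>*\<^sup>* S Y" for Y
    using that
  proof (induction rule: rtranclp_induct)
    case (step Y Y')
    have "Y \<subseteq> verts G"
      using force_steps_subset_verts[OF step.hyps(1)] assms by (simp add: forcing_set_def)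
    with step.hyps(2) have "force_step skew (map_graph f G) (f ` Y) (f ` Y')"
      by (intro force_step_map_graph)
    with step.IH show ?case
      by (rule rtranclp.rtrancl_into_rtrancl)
  qed simp
  then show ?thesis
    using assms by (auto simp: forcing_set_def)
qed

lemma forcing_number_map_graph_le: "forcing_number skew (map_graph f G) \<le> forcing_number skew G"
proof -
  obtain S where S: "forcing_set skew G S" "card S = forcing_number skew G"
    by (rule forcing_number_obtain)
  have "card (f ` S) = card S"
    using S(1) inj by (auto simp: forcing_set_def intro: card_image inj_on_subset)
  then show ?thesis
    using forcing_number_le[OF forcing_set_map_graph[OF S(1)]] S(2) by simp
qed

end

lemma forcing_number_graph_copy:
  assumes "simple_graph G"
  shows "forcing_number skew (graph_copy i G) = forcing_number skew G"
proof (rule antisym)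
  show "forcing_number skew (graph_copy i G) \<le> forcing_number skew G"
    unfolding graph_copy_eq_map_graph
    by (rule forcing_number_map_graph_le) (auto simp: assms inj_on_def)
  have "inj_on snd (verts (graph_copy i G))"
    by (auto simp: verts_graph_copy inj_on_def)
  from forcing_number_map_graph_le[OF this simple_graph_graph_copy[OF assms]]
  show "forcing_number skew G \<le> forcing_number skew (graph_copy i G)"
    by (simp add: map_graph_snd_graph_copy)
qed

context disjoint_simple_graphs
begin

lemma card_split_verts:
  assumes "S \<subseteq> verts A \<union> verts B"
  shows "card S = card (S \<inter> verts A) + card (S \<inter> verts B)"
proof -
  have "card ((S \<inter> verts A) \<union> (S \<inter> verts B)) = card (S \<inter> verts A) + card (S \<inter> verts B)"
    using finite_A finite_B disjoint by (intro card_Un_disjoint) auto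
  moreover have "(S \<inter> verts A) \<union> (S \<inter> verts B) = S"
    using assms by blast
  ultimately show ?thesis
    by simp
qed

lemma force_steps_join_extend:
  assumes "(force_step skew A)\<^sup>*\<^sup>* X Y"
  shows "(force_step skew (graph_join A B))\<^sup>*\<^sup>* (X \<union> verts B) (Y \<union> verts B)"
  using assms
proof (induction rule: rtranclp_induct)
  case (step Y Y')
  from step.hyps(2) obtain u w where u: "u \<in> (if skew then verts A else Y)"
    and w: "nbhd A u - Y = {w}" and Y': "Y' = insert w Y"
    by (rule force_stepE)
  have uA: "u \<in> verts A"
    by (rule forced_vertexD(2)[OF simple_A w])
  have "w \<notin> verts B"
    using forced_vertexD(3)[OF simple_A w] disjoint by blast
  then have "nbhd (graph_join A B) u - (Y \<union> verts B) = {w}"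
    using w by (auto simp: nbhd_graph_join_left[OF uA])
  moreover have "u \<in> (if skew then verts (graph_join A B) else Y \<union> verts B)"
    using u by (auto simp: verts_graph_join)
  ultimately have "force_step skew (graph_join A B) (Y \<union> verts B) (Y' \<union> verts B)"
    unfolding Y' Un_insert_left by (rule force_stepI)
  with step.IH show ?case
    by (rule rtranclp.rtrancl_into_rtrancl)
qed simp

text \<open>If all of \<open>B\<close> is blue, a force by a vertex of \<open>B\<close> can only happen when a single vertex
  \<open>w\<close> of \<open>A\<close> is white; then any neighbour of \<open>w\<close> inside \<open>A\<close> performs the same force in \<open>A\<close>.\<close>

lemma force_step_join_restrict:
  assumes no_iso: "no_isolated_vertices A"
    and step: "force_step skew (graph_join A B) Y Y'" and blue: "verts B \<subseteq> Y"
  shows "force_step skew A (Y \<inter> verts A) (Y' \<inter> verts A)"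
proof -
  interpret swapped: disjoint_simple_graphs B A by (rule swap)
  from step obtain u w where u: "u \<in> (if skew then verts (graph_join A B) else Y)"
    and w: "nbhd (graph_join A B) u - Y = {w}" and Y': "Y' = insert w Y"
    by (rule force_stepE)
  have uJ: "u \<in> verts A \<union> verts B"
    using forced_vertexD(2)[OF simple_graph_join w] by (simp add: verts_graph_join)
  have wA: "w \<in> verts A" and wY: "w \<notin> Y"
    using forced_vertexD(3)[OF simple_graph_join w] forced_vertex_in_nbhd(2)[OF w] blue
    by (auto simp: verts_graph_join)
  have Y'A: "Y' \<inter> verts A = insert w (Y \<inter> verts A)"
    using Y' wA by blast
  show ?thesis
  proof (cases "u \<in> verts A")
    case True
    have "nbhd A u - Y \<inter> verts A = {w}"
      using w blue nbhd_subset_verts[of A u] by (auto simp: nbhd_graph_join_left[OF True])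
    moreover have "u \<in> (if skew then verts A else Y \<inter> verts A)"
      using u True by auto
    ultimately show ?thesis
      unfolding Y'A by (rule force_stepI)
  next
    case False
    then have "u \<in> verts B"
      using uJ by blast
    then have white: "verts A - Y = {w}"
      using w wA wY swapped.nbhd_graph_join_left graph_join_commute[of A B] by auto
    obtain x where x: "x \<in> nbhd A w"
      using no_iso wA by (auto simp: no_isolated_vertices_def)
    then have "adj A x w"
      by (simp add: nbhd_def adj_commute)
    then have "x \<in> Y \<inter> verts A" and "w \<in> nbhd A x"
      using simple_graph_adjD[OF simple_A \<open>adj A x w\<close>] white wA by (auto simp: nbhd_def)
    then have "nbhd A x - Y \<inter> verts A = {w}" and "x \<in> (if skew then verts A else Y \<inter> verts A)"
      using white nbhd_subset_verts[of A x] by auto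
    then show ?thesis
      unfolding Y'A by (intro force_stepI)
  qed
qed

lemma force_steps_join_restrict:
  assumes no_iso: "no_isolated_vertices A"
    and steps: "(force_step skew (graph_join A B))\<^sup>*\<^sup>* X Y" and blue: "verts B \<subseteq> X"
  shows "(force_step skew A)\<^sup>*\<^sup>* (X \<inter> verts A) (Y \<inter> verts A)"
  using steps
proof (induction rule: rtranclp_induct)
  case (step Y Y')
  have "verts B \<subseteq> Y"
    using blue force_steps_subset[OF step.hyps(1)] by blast
  with step.hyps(2) have "force_step skew A (Y \<inter> verts A) (Y' \<inter> verts A)"
    by (rule force_step_join_restrict[OF no_iso])
  with step.IH show ?case
    by (rule rtranclp.rtrancl_into_rtrancl)
qed simp

lemma forcing_set_join_extend:
  "forcing_set skew A S \<Longrightarrow> forcing_set skew (graph_join A B) (S \<union> verts B)"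
  using force_steps_join_extend by (auto simp: forcing_set_def verts_graph_join)

lemma forcing_set_join_restrict:
  assumes "no_isolated_vertices A" and "forcing_set skew (graph_join A B) S" and "verts B \<subseteq> S"
  shows "forcing_set skew A (S \<inter> verts A)"
  using force_steps_join_restrict[OF assms(1) _ assms(3), of skew "verts (graph_join A B)"] assms(2)
  by (auto simp: forcing_set_def verts_graph_join)

lemma forcing_number_join_le:
  "forcing_number skew (graph_join A B) \<le> forcing_number skew A + card (verts B)"
proof -
  obtain S where S: "forcing_set skew A S" "card S = forcing_number skew A"
    by (rule forcing_number_obtain)
  have "S \<subseteq> verts A"
    using S(1) by (simp add: forcing_set_def)
  then have "card (S \<union> verts B) = card S + card (verts B)"
    using disjoint finite_A finite_B by (intro card_Un_disjoint) (auto intro: finite_subset)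
  then show ?thesis
    using forcing_number_le[OF forcing_set_join_extend[OF S(1)]] S(2) by simp
qed

lemma join_forcing_set_card_ge_if_blue:
  assumes "no_isolated_vertices A" and "forcing_set skew (graph_join A B) S" and "verts B \<subseteq> S"
  shows "forcing_number skew A + card (verts B) \<le> card S"
proof -
  have "card S = card (S \<inter> verts A) + card (verts B)"
    using card_split_verts[of S] assms(2,3) by (auto simp: forcing_set_def verts_graph_join Int_absorb1)
  then show ?thesis
    using forcing_number_le[OF forcing_set_join_restrict[OF assms]] by simp
qed

text \<open>If the first force of \<open>S\<close> is performed by a vertex \<open>u\<close> of \<open>A\<close> while part of \<open>B\<close> is
  white, then \<open>u\<close> sees all of its \<open>A\<close>-neighbours blue and exactly one white vertex \<open>w\<close> of \<open>B\<close>.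
  Hence \<open>S \<union> {w}\<close> contains \<open>B\<close>, and in \<open>A\<close> one blue neighbour of \<open>u\<close> may be dropped from \<open>S\<close>.\<close>

lemma join_forcing_set_card_ge_if_first_force:
  assumes no_iso: "no_isolated_vertices A" and S: "forcing_set skew (graph_join A B) S"
    and white: "\<not> verts B \<subseteq> S" and uA: "u \<in> verts A"
    and u: "u \<in> (if skew then verts (graph_join A B) else S)"
    and w: "nbhd (graph_join A B) u - S = {w}"
    and rest: "(force_step skew (graph_join A B))\<^sup>*\<^sup>* (insert w S) (verts (graph_join A B))"
  shows "forcing_number skew A + card (verts B) \<le> card S"
proof -
  have wB: "verts B - S = {w}"
    using w white by (auto simp: nbhd_graph_join_left[OF uA])
  then have nbhd_blue: "nbhd A u \<subseteq> S \<inter> verts A"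
    using w disjoint nbhd_subset_verts[of A u] by (auto simp: nbhd_graph_join_left[OF uA])
  have "forcing_set skew (graph_join A B) (insert w S)"
    using S rest wB by (auto simp: forcing_set_def verts_graph_join)
  moreover have "insert w S \<inter> verts A = S \<inter> verts A"
    using wB disjoint by blast
  ultimately have SA: "forcing_set skew A (S \<inter> verts A)"
    using forcing_set_join_restrict[OF no_iso, of skew "insert w S"] wB by auto
  obtain v where v: "v \<in> nbhd A u"
    using no_iso uA by (auto simp: no_isolated_vertices_def)
  have "u \<in> (if skew then verts A else S \<inter> verts A)"
    using u uA by auto
  then have "forcing_set skew A (S \<inter> verts A - {v})"
    using forcing_set_remove_neighbour[OF simple_A SA _ nbhd_blue v] by blast
  then have "forcing_number skew A + 1 \<le> card (S \<inter> verts A)"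
    using forcing_number_le v nbhd_blue finite_A card_Diff1_less[of "S \<inter> verts A" v] by fastforce
  moreover have "S \<inter> verts B = verts B - {w}" and "w \<in> verts B"
    using wB by auto
  then have "card (S \<inter> verts B) + 1 = card (verts B)"
    using finite_B card_Suc_Diff1 by fastforce
  moreover have "card S = card (S \<inter> verts A) + card (S \<inter> verts B)"
    using card_split_verts[of S] S by (simp add: forcing_set_def verts_graph_join)
  ultimately show ?thesis
    by linarith
qed

lemma join_forcing_set_card_ge:
  assumes "no_isolated_vertices A" and "no_isolated_vertices B"
    and S: "forcing_set skew (graph_join A B) S"
  shows "min (forcing_number skew A + card (verts B)) (forcing_number skew B + card (verts A)) \<le> card S"
proof -
  interpret swapped: disjoint_simple_graphs B A by (rule swap)
  show ?thesis
  proof (cases "verts B \<subseteq> S \<or> verts A \<subseteq> S")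
    case True
    show ?thesis
      using True join_forcing_set_card_ge_if_blue[OF assms(1) S]
        swapped.join_forcing_set_card_ge_if_blue[OF assms(2), unfolded graph_join_commute[of B A]] S
      by fastforce
  next
    case False
    let ?J = "graph_join A B"
    have "S \<noteq> verts ?J"
      using False by (auto simp: verts_graph_join)
    then obtain S' where "force_step skew ?J S S'" and rest: "(force_step skew ?J)\<^sup>*\<^sup>* S' (verts ?J)"
      using S by (auto simp: forcing_set_def elim: converse_rtranclpE)
    then obtain u w where u: "u \<in> (if skew then verts ?J else S)" and w: "nbhd ?J u - S = {w}"
      and S': "S' = insert w S"
      by (auto elim: force_stepE)
    have "u \<in> verts A \<or> u \<in> verts B"
      using forced_vertexD(2)[OF simple_graph_join w] by (simp add: verts_graph_join)
    then show ?thesis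
    proof
      assume "u \<in> verts A"
      then show ?thesis
        using join_forcing_set_card_ge_if_first_force[OF assms(1) S _ _ u w] False rest S' by fastforce
    next
      assume "u \<in> verts B"
      then show ?thesis
        using swapped.join_forcing_set_card_ge_if_first_force[OF assms(2), of skew S u w,
            unfolded graph_join_commute[of B A]] S False u w rest S' by fastforce
    qed
  qed
qed

lemma forcing_number_join:
  assumes "no_isolated_vertices A" and "no_isolated_vertices B"
  shows "forcing_number skew (graph_join A B) =
    min (forcing_number skew A + card (verts B)) (forcing_number skew B + card (verts A))"
proof (rule antisym)
  interpret swapped: disjoint_simple_graphs B A by (rule swap)
  show "forcing_number skew (graph_join A B) \<le>
      min (forcing_number skew A + card (verts B)) (forcing_number skew B + card (verts A))"
    using forcing_number_join_le[of skew]
      swapped.forcing_number_join_le[of skew, unfolded graph_join_commute[of B A]] by simp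
  obtain S where "forcing_set skew (graph_join A B) S" and "card S = forcing_number skew (graph_join A B)"
    by (rule forcing_number_obtain)
  then show "min (forcing_number skew A + card (verts B)) (forcing_number skew B + card (verts A)) \<le>
      forcing_number skew (graph_join A B)"
    using join_forcing_set_card_ge[OF assms] by metis
qed

end

lemma forcing_number_iter_join:
  assumes "simple_graph G" and "no_isolated_vertices G"
  shows "forcing_number skew (iter_join k G) = k * card (verts G) + forcing_number skew G"
proof (induction k)
  case 0
  then show ?case
    using forcing_number_graph_copy[OF assms(1)] by simp
next
  case (Suc k)
  interpret disjoint_simple_graphs "iter_join k G" "graph_copy (Suc k) G"
    using assms(1) by (simp add: disjoint_simple_graphs_iter_join simple_graph_iter_join)
  have "forcing_number skew (iter_join (Suc k) G) =
      min (forcing_number skew (iter_join k G) + card (verts G))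
        (forcing_number skew G + Suc k * card (verts G))"
    using forcing_number_join[OF no_isolated_vertices_iter_join[OF assms]
        no_isolated_vertices_graph_copy[OF assms]]
    by (simp add: card_verts_graph_copy card_verts_iter_join forcing_number_graph_copy
        simple_graph_finite assms(1))
  then show ?case
    using Suc.IH by simp
qed

section \<open>Characteristic polynomials\<close>

lemma bij_betw_map_permutation:
  assumes g: "bij_betw g U V"
  shows "bij_betw (map_permutation U g) {p. p permutes U} {p. p permutes V}"
proof (rule bij_betw_byWitness[where f' = "map_permutation V (inv_into U g)"])
  have g': "bij_betw (inv_into U g) V U"
    using g by (rule bij_betw_inv_into)
  show "\<forall>p\<in>{p. p permutes U}. map_permutation V (inv_into U g) (map_permutation U g p) = p"
    using map_permutation_compose_inv[OF g] g by (auto simp: bij_betw_inv_into_left)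
  show "\<forall>p\<in>{p. p permutes V}. map_permutation U g (map_permutation V (inv_into U g) p) = p"
    using map_permutation_compose_inv[OF g'] g by (auto simp: bij_betw_inv_into_right)
  show "map_permutation U g ` {p. p permutes U} \<subseteq> {p. p permutes V}"
    using map_permutation_permutes[OF g] by auto
  show "map_permutation V (inv_into U g) ` {p. p permutes V} \<subseteq> {p. p permutes U}"
    using map_permutation_permutes[OF g'] by auto
qed

lemma charpoly_on_bij_betw:
  assumes fin: "finite U" and g: "bij_betw g U V"
  shows "charpoly_on V M = charpoly_on U (\<lambda>u v. M (g u) (g v))"
proof -
  let ?h = "map_permutation U g"
  let ?F = "\<lambda>M p v. (if v = p v then [:0, 1:] else 0) - [:M v (p v):]"
  have inj: "inj_on g U"
    using g by (rule bij_betw_imp_inj_on)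
  have "charpoly_on V M = (\<Sum>q | q permutes U. of_int (sign (?h q)) * (\<Prod>v\<in>V. ?F M (?h q) v))"
    unfolding charpoly_on_def by (rule sum.reindex_bij_betw[OF bij_betw_map_permutation[OF g], symmetric])
  also have "\<dots> = charpoly_on U (\<lambda>u v. M (g u) (g v))"
    unfolding charpoly_on_def
  proof (rule sum.cong[OF refl])
    fix q assume "q \<in> {q. q permutes U}"
    then have q: "q permutes U"
      by simp
    have "(\<Prod>v\<in>V. ?F M (?h q) v) = (\<Prod>u\<in>U. ?F M (?h q) (g u))"
      by (rule prod.reindex_bij_betw[OF g, symmetric])
    also have "\<dots> = (\<Prod>u\<in>U. ?F (\<lambda>u v. M (g u) (g v)) q u)"
    proof (rule prod.cong[OF refl])
      fix u assume u: "u \<in> U"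
      then have "q u \<in> U"
        using q by (simp add: permutes_in_image)
      then have "g u = g (q u) \<longleftrightarrow> u = q u"
        using inj u by (auto dest: inj_onD)
      then show "?F M (?h q) (g u) = ?F (\<lambda>u v. M (g u) (g v)) q u"
        by (simp add: map_permutation_apply[OF inj u])
    qed
    finally show "of_int (sign (?h q)) * (\<Prod>v\<in>V. ?F M (?h q) v) =
        of_int (sign q) * (\<Prod>u\<in>U. ?F (\<lambda>u v. M (g u) (g v)) q u)"
      using sign_map_permutation[OF inj q fin] by simp
  qed
  finally show ?thesis .
qed

lemma char_poly_matrix_index:
  assumes "A \<in> carrier_mat n n" and "i < n" and "j < n"
  shows "char_poly_matrix A $$ (i, j) = (if i = j then [:0, 1:] else 0) - [:A $$ (i, j):]"
  using assms by (auto simp: char_poly_matrix_def)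

lemma dim_char_poly_matrix [simp]:
  "dim_row (char_poly_matrix A) = dim_row A" "dim_col (char_poly_matrix A) = dim_col A"
  by (simp_all add: char_poly_matrix_def)

lemma charpoly_on_atLeastLessThan: "charpoly_on {0..<n} M = char_poly (mat n n (\<lambda>(i, j). M i j))"
proof -
  have "char_poly (mat n n (\<lambda>(i, j). M i j)) =
      (\<Sum>p | p permutes {0..<n}. signof p * (\<Prod>i = 0..<n. char_poly_matrix (mat n n (\<lambda>(i, j). M i j)) $$ (i, p i)))"
    unfolding char_poly_def by (rule det_def') simp
  also have "\<dots> = charpoly_on {0..<n} M"
    unfolding charpoly_on_def
  proof (rule sum.cong[OF refl], rule arg_cong2[where f = "(*)"])
    fix p assume "p \<in> {p. p permutes {0..<n}}"
    then have "p i < n" if "i < n" for i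
      using that by (simp add: permutes_in_image)
    then show "(\<Prod>i = 0..<n. char_poly_matrix (mat n n (\<lambda>(i, j). M i j)) $$ (i, p i)) =
        (\<Prod>v\<in>{0..<n}. (if v = p v then [:0, 1:] else 0) - [:M v (p v):])"
      by (intro prod.cong) (auto simp: char_poly_matrix_def one_pCons)
  qed simp
  finally show ?thesis ..
qed

lemma charpoly_on_eq_char_poly:
  "bij_betw g {0..<n} V \<Longrightarrow> charpoly_on V M = char_poly (mat n n (\<lambda>(i, j). M (g i) (g j)))"
  using charpoly_on_bij_betw[of "{0..<n}" g V M] by (simp add: charpoly_on_atLeastLessThan)

lemma charpoly_on_cong:
  assumes "\<And>u v. u \<in> V \<Longrightarrow> v \<in> V \<Longrightarrow> M u v = M' u v"
  shows "charpoly_on V M = charpoly_on V M'"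
  unfolding charpoly_on_def using assms
  by (intro sum.cong prod.cong refl) (auto simp: permutes_in_image)

lemma charpoly_on_nonzero:
  assumes "finite V"
  shows "charpoly_on V M \<noteq> 0"
proof -
  obtain g where g: "bij_betw g {0..<card V} V"
    using ex_bij_betw_nat_finite[OF assms] by blast
  let ?A = "mat (card V) (card V) (\<lambda>(i, j). M (g i) (g j))"
  have "coeff (char_poly ?A) (card V) = 1"
    using degree_monic_char_poly[of ?A "card V"] by simp
  then show ?thesis
    using charpoly_on_eq_char_poly[OF g] by auto
qed

lemma charpoly_on_shift:
  "charpoly_on V (\<lambda>u v. M u v + (if u = v then c else 0)) = pcompose (charpoly_on V M) [:-c, 1:]"
  unfolding charpoly_on_def pcompose_sum pcompose_mult pcompose_prod
proof (rule sum.cong[OF refl])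
  fix p
  have "(if v = p v then [:0, 1:] else 0) - [:M v (p v) + (if v = p v then c else 0):] =
      pcompose ((if v = p v then [:0, 1:] else 0) - [:M v (p v):]) [:-c, 1:]" for v
    by (simp add: pcompose_diff algebra_simps)
  then show "of_int (sign p) * (\<Prod>v\<in>V. (if v = p v then [:0, 1:] else 0) - [:M v (p v) + (if v = p v then c else 0):]) =
      pcompose (of_int (sign p)) [:-c, 1:] * (\<Prod>v\<in>V. pcompose ((if v = p v then [:0, 1:] else 0) - [:M v (p v):]) [:-c, 1:])"
    by (simp add: of_int_poly)
qed

lemma char_poly_four_block_lower_left_zero:
  fixes A :: "'a :: idom mat"
  assumes A: "A \<in> carrier_mat n n" and B: "B \<in> carrier_mat n m" and D: "D \<in> carrier_mat m m"
  shows "char_poly (four_block_mat A B (0\<^sub>m m n) D) = char_poly A * char_poly D"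
proof -
  have "char_poly_matrix (four_block_mat A B (0\<^sub>m m n) D) =
      four_block_mat (char_poly_matrix A) (map_mat (\<lambda>a. [:- a:]) B) (0\<^sub>m m n) (char_poly_matrix D)"
    using A B D by (intro eq_matI) (auto simp: char_poly_matrix_def)
  then show ?thesis
    using A B D unfolding char_poly_def
    by (simp add: det_four_block_mat_lower_left_zero[of _ n _ m])
qed

lemma bij_betw_concat:
  fixes a b :: nat
  assumes f: "bij_betw f {0..<a} X" and g: "bij_betw g {0..<b} Y" and disj: "X \<inter> Y = {}"
  shows "bij_betw (\<lambda>i. if i < a then f i else g (i - a)) {0..<a + b} (X \<union> Y)"
proof -
  let ?h = "\<lambda>i. if i < a then f i else g (i - a)"
  have "bij_betw ?h {0..<a} X"
    using f by (rule bij_betw_cong[THEN iffD1, rotated]) auto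
  moreover have "bij_betw (\<lambda>i. i - a) {a..<a + b} {0..<b}"
    by (rule bij_betw_byWitness[where f' = "\<lambda>i. i + a"]) auto
  then have "bij_betw (g \<circ> (\<lambda>i. i - a)) {a..<a + b} Y"
    using g by (rule bij_betw_trans)
  then have "bij_betw ?h {a..<a + b} Y"
    by (rule bij_betw_cong[THEN iffD1, rotated]) auto
  ultimately have "bij_betw ?h ({0..<a} \<union> {a..<a + b}) (X \<union> Y)"
    using disj by (rule bij_betw_combine)
  moreover have "{0..<a} \<union> {a..<a + b} = {0..<a + b}"
    by auto
  ultimately show ?thesis
    by simp
qed

lemma charpoly_on_Un_block_triangular:
  assumes fin: "finite X" "finite Y" and disj: "X \<inter> Y = {}"
    and zero: "\<And>u v. u \<in> Y \<Longrightarrow> v \<in> X \<Longrightarrow> M u v = 0"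
  shows "charpoly_on (X \<union> Y) M = charpoly_on X M * charpoly_on Y M"
proof -
  define a b where "a = card X" and "b = card Y"
  obtain f where f: "bij_betw f {0..<a} X"
    using ex_bij_betw_nat_finite[OF fin(1)] a_def by blast
  obtain g where g: "bij_betw g {0..<b} Y"
    using ex_bij_betw_nat_finite[OF fin(2)] b_def by blast
  define h where "h i = (if i < a then f i else g (i - a))" for i
  have h: "bij_betw h {0..<a + b} (X \<union> Y)"
    unfolding h_def by (rule bij_betw_concat[OF f g disj])
  have fX: "i < a \<Longrightarrow> f i \<in> X" and gY: "i < b \<Longrightarrow> g i \<in> Y" for i
    using f g by (auto dest: bij_betwE)
  let ?M = "\<lambda>i j. M (h i) (h j)"
  have "mat (a + b) (a + b) (\<lambda>(i, j). ?M i j) =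
      four_block_mat (mat a a (\<lambda>(i, j). M (f i) (f j))) (mat a b (\<lambda>(i, j). M (f i) (g j)))
        (0\<^sub>m b a) (mat b b (\<lambda>(i, j). M (g i) (g j)))"
    by (rule eq_matI) (auto simp: h_def zero fX gY)
  then show ?thesis
    using charpoly_on_eq_char_poly[OF h] charpoly_on_eq_char_poly[OF f] charpoly_on_eq_char_poly[OF g]
    by (simp add: char_poly_four_block_lower_left_zero)
qed

lemma det_lower_triangular_unit:
  assumes "A \<in> carrier_mat n n"
    and "\<And>i j. i < j \<Longrightarrow> j < n \<Longrightarrow> A $$ (i, j) = 0" and "\<And>i. i < n \<Longrightarrow> A $$ (i, i) = 1"
  shows "det A = 1"
proof -
  have "diag_mat A = replicate n 1"
    using assms by (auto intro: nth_equalityI simp: diag_mat_def)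
  then show ?thesis
    using det_lower_triangular[OF assms(2,1)] by simp
qed

lemma index_mult_sum_columns:
  fixes X :: "'a :: semiring_1 mat"
  assumes "X \<in> carrier_mat n n" and i: "i < n" and j: "j < n"
  shows "(X * mat n n (\<lambda>(i, j). if i = j \<or> j = 0 then 1 else 0)) $$ (i, j) =
    (if j = 0 then (\<Sum>k = 0..<n. X $$ (i, k)) else X $$ (i, j))"
proof -
  have "(X * mat n n (\<lambda>(i, j). if i = j \<or> j = 0 then 1 else 0)) $$ (i, j) =
      (\<Sum>k = 0..<n. if j = 0 \<or> k = j then X $$ (i, k) else 0)"
    using assms by (auto simp: scalar_prod_def intro: sum.cong)
  then show ?thesis
    using j by simp
qed

lemma index_mult_subtract_first_row:
  fixes Y :: "'a :: ring_1 mat"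
  assumes "Y \<in> carrier_mat n n" and i: "i < n" and j: "j < n"
  shows "(mat n n (\<lambda>(i, j). if i = j then 1 else if j = 0 then -1 else 0) * Y) $$ (i, j) =
    Y $$ (i, j) - (if i = 0 then 0 else Y $$ (0, j))"
proof -
  have "(mat n n (\<lambda>(i, j). if i = j then 1 else if j = 0 then -1 else 0) * Y) $$ (i, j) =
      (\<Sum>k = 0..<n. (if k = i then Y $$ (k, j) else 0) - (if i \<noteq> 0 \<and> k = 0 then Y $$ (k, j) else 0))"
    using assms by (auto simp: scalar_prod_def intro: sum.cong)
  then show ?thesis
    using i by (simp add: sum_subtractf)
qed

text \<open>Adding all columns to the first one and then subtracting the first row from all others
  turns the characteristic matrix into a block triangular one.\<close>

lemma char_poly_const_row_sums:
  fixes A :: "'a :: comm_ring_1 mat"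
  assumes A: "A \<in> carrier_mat (Suc n) (Suc n)"
    and rows: "\<And>i. i < Suc n \<Longrightarrow> (\<Sum>j = 0..<Suc n. A $$ (i, j)) = s"
  shows "char_poly A = [:-s, 1:] * char_poly (mat n n (\<lambda>(i, j). A $$ (Suc i, Suc j) - A $$ (0, Suc j)))"
proof -
  let ?X = "char_poly_matrix A"
  let ?A' = "mat n n (\<lambda>(i, j). A $$ (Suc i, Suc j) - A $$ (0, Suc j))"
  let ?C = "mat (Suc n) (Suc n) (\<lambda>(i, j). if i = j \<or> j = 0 then 1 else 0) :: 'a poly mat"
  let ?R = "mat (Suc n) (Suc n) (\<lambda>(i, j). if i = j then 1 else if j = 0 then -1 else 0) :: 'a poly mat"
  let ?B = "four_block_mat (mat 1 1 (\<lambda>_. [:-s, 1:])) (mat 1 n (\<lambda>(_, j). ?X $$ (0, Suc j)))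
      (0\<^sub>m n 1) (char_poly_matrix ?A')"
  have X: "?X \<in> carrier_mat (Suc n) (Suc n)"
    using A by simp
  have "(\<Sum>k = 0..<Suc n. ?X $$ (i, k)) = [:-s, 1:]" if "i < Suc n" for i
    using that rows[OF that] by (simp add: char_poly_matrix_index[OF A] sum_subtractf sum_to_poly)
  then have XC: "(?X * ?C) $$ (i, j) = (if j = 0 then [:-s, 1:] else ?X $$ (i, j))"
    if "i < Suc n" and "j < Suc n" for i j
    using index_mult_sum_columns[OF X that] that by simp
  have XC_carrier: "?X * ?C \<in> carrier_mat (Suc n) (Suc n)"
    using X by simp
  have "?R * (?X * ?C) = ?B"
  proof (rule eq_matI)
    fix i j assume "i < dim_row ?B" and "j < dim_col ?B"
    then have "i < Suc n" and "j < Suc n"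
      by auto
    then show "(?R * (?X * ?C)) $$ (i, j) = ?B $$ (i, j)"
      by (cases i; cases j) (auto simp: index_mult_subtract_first_row[OF XC_carrier] XC
          char_poly_matrix_index[OF A] char_poly_matrix_index[OF mat_carrier] simp del: index_mult_mat)
  qed auto
  moreover have "det (?R * (?X * ?C)) = det ?R * (det ?X * det ?C)"
    using det_mult[OF _ XC_carrier, of ?R] det_mult[OF X, of ?C] by simp
  moreover have "det ?C = 1"
    by (rule det_lower_triangular_unit[of _ "Suc n"]) auto
  moreover have "det ?R = 1"
    by (rule det_lower_triangular_unit[of _ "Suc n"]) auto
  ultimately have "char_poly A = det ?B"
    by (simp add: char_poly_def)
  also have "\<dots> = [:-s, 1:] * char_poly ?A'"
    unfolding char_poly_def
    by (subst det_four_block_mat_lower_left_zero_col) (auto simp: det_single)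
  finally show ?thesis .
qed

lemma charpoly_on_const_row_sums:
  assumes fin: "finite V" and v0: "v0 \<in> V" and rows: "\<And>u. u \<in> V \<Longrightarrow> (\<Sum>v\<in>V. M u v) = s"
  shows "charpoly_on V M = [:-s, 1:] * charpoly_on (V - {v0}) (\<lambda>u v. M u v - M v0 v)"
proof -
  define n where "n = card (V - {v0})"
  obtain g where g: "bij_betw g {0..<n} (V - {v0})"
    using ex_bij_betw_nat_finite[of "V - {v0}"] fin n_def by blast
  define h where "h i = (if i < 1 then v0 else g (i - 1))" for i
  have "bij_betw h {0..<1 + n} ({v0} \<union> (V - {v0}))"
    unfolding h_def by (rule bij_betw_concat[OF _ g]) (auto simp: bij_betw_def)
  then have h: "bij_betw h {0..<Suc n} V"
    using v0 by (simp add: insert_absorb)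
  let ?H = "mat (Suc n) (Suc n) (\<lambda>(i, j). M (h i) (h j))"
  have "(\<Sum>j = 0..<Suc n. ?H $$ (i, j)) = s" if "i < Suc n" for i
  proof -
    have "(\<Sum>j = 0..<Suc n. ?H $$ (i, j)) = (\<Sum>j = 0..<Suc n. M (h i) (h j))"
      using that by (intro sum.cong) auto
    also have "\<dots> = s"
      using rows[of "h i"] sum.reindex_bij_betw[OF h, of "M (h i)"] h that by (auto dest: bij_betwE)
    finally show ?thesis .
  qed
  then have "char_poly ?H = [:-s, 1:] * char_poly (mat n n (\<lambda>(i, j). ?H $$ (Suc i, Suc j) - ?H $$ (0, Suc j)))"
    by (intro char_poly_const_row_sums) auto
  also have "mat n n (\<lambda>(i, j). ?H $$ (Suc i, Suc j) - ?H $$ (0, Suc j)) =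
      mat n n (\<lambda>(i, j). M (g i) (g j) - M v0 (g j))"
    by (rule cong_mat) (auto simp: h_def)
  finally show ?thesis
    using charpoly_on_eq_char_poly[OF g] charpoly_on_eq_char_poly[OF h] by simp
qed

lemma pcompose_power: "pcompose (p ^ n) q = pcompose p q ^ n"
  by (induction n) (simp_all add: pcompose_mult)

lemma order_le_order_pcompose_shift:
  fixes p :: "'a :: idom poly"
  assumes "p \<noteq> 0"
  shows "order a p \<le> order (a + c) (pcompose p [:-c, 1:])"
proof -
  have "[:-a, 1:] ^ order a p dvd p"
    by (rule order_1)
  then have "pcompose ([:-a, 1:] ^ order a p) [:-c, 1:] dvd pcompose p [:-c, 1:]"
    by (metis dvdE dvd_triv_left pcompose_mult)
  moreover have "pcompose ([:-a, 1:] ^ order a p) [:-c, 1:] = [:-(a + c), 1:] ^ order a p"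
    by (simp add: pcompose_power)
  ultimately have "[:-(a + c), 1:] ^ order a p dvd pcompose p [:-c, 1:]"
    by simp
  moreover have "pcompose p [:-c, 1:] \<noteq> 0"
    using assms by (simp add: pcompose_eq_0_iff)
  ultimately show ?thesis
    using order_divides[of "a + c" "order a p" "pcompose p [:-c, 1:]"] by blast
qed

lemma order_pcompose_shift:
  fixes p :: "'a :: idom poly"
  assumes "p \<noteq> 0"
  shows "order (a + c) (pcompose p [:-c, 1:]) = order a p"
proof (rule antisym)
  have "pcompose (pcompose p [:-c, 1:]) [:c, 1:] = p"
    by (simp add: pcompose_assoc[symmetric])
  then show "order (a + c) (pcompose p [:-c, 1:]) \<le> order a p"
    using order_le_order_pcompose_shift[of "pcompose p [:-c, 1:]" "a + c" "-c"] assms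
    by (simp add: pcompose_eq_0_iff)
qed (rule order_le_order_pcompose_shift[OF assms])

lemma proots_pcompose_shift:
  fixes p :: "'a :: idom poly"
  assumes "p \<noteq> 0"
  shows "proots (pcompose p [:-c, 1:]) = image_mset (\<lambda>x. x + c) (proots p)"
proof (rule multiset_eqI)
  fix y
  have "(\<lambda>x. x + c) -` {y} = {y - c}"
    by (auto simp: algebra_simps)
  then have "count (image_mset (\<lambda>x. x + c) (proots p)) y = count (proots p) (y - c)"
    by (auto simp: count_image_mset Int_insert_left not_in_iff)
  also have "\<dots> = order y (pcompose p [:-c, 1:])"
    using order_pcompose_shift[OF assms, of "y - c" c] assms by simp
  finally show "count (proots (pcompose p [:-c, 1:])) y = count (image_mset (\<lambda>x. x + c) (proots p)) y"
    using assms by (simp add: pcompose_eq_0_iff)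
qed

section \<open>The Laplacian spectrum of a join\<close>

lemma laplacian_row_sum:
  assumes simple: "simple_graph G" and u: "u \<in> verts G"
  shows "(\<Sum>v\<in>verts G. laplacian G u v) = 0"
proof -
  have fin: "finite (verts G)"
    by (rule simple_graph_finite[OF simple])
  have "laplacian G u v = (if v = u then real (degree G u) else 0) - (if v \<in> nbhd G u then 1 else 0)"
    if "v \<in> verts G" for v
    using that simple_graph_adjD(3)[OF simple, of u v] by (auto simp: laplacian_def nbhd_def)
  then have "(\<Sum>v\<in>verts G. laplacian G u v) = real (degree G u) - (\<Sum>v\<in>verts G. if v \<in> nbhd G u then 1 else 0)"
    using fin u by (simp add: sum_subtractf)
  also have "(\<Sum>v\<in>verts G. if v \<in> nbhd G u then 1 else 0) = real (card (nbhd G u))"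
    using fin nbhd_subset_verts[of G u] by (simp add: sum.If_cases Int_absorb1)
  finally show ?thesis
    by (simp add: degree_def)
qed

lemma laplacian_map_graph:
  assumes inj: "inj_on f (verts G)" and simple: "simple_graph G"
    and u: "u \<in> verts G" and v: "v \<in> verts G"
  shows "laplacian (map_graph f G) (f u) (f v) = laplacian G u v"
proof -
  have "degree (map_graph f G) (f u) = degree G u"
    unfolding degree_def nbhd_map_graph[OF inj simple u]
    by (rule card_image) (rule inj_on_subset[OF inj nbhd_subset_verts])
  moreover have "f u = f v \<longleftrightarrow> u = v"
    using inj u v by (auto dest: inj_onD)
  ultimately show ?thesis
    using adj_map_graph[OF inj simple u v] by (cases "u = v") (simp_all add: laplacian_def)
qed

lemma lap_spectrum_graph_copy:
  assumes simple: "simple_graph G"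
  shows "lap_spectrum (graph_copy i G) = lap_spectrum G"
proof -
  have inj: "inj_on (Pair i) (verts G)"
    by (simp add: inj_on_def)
  then have "bij_betw (Pair i) (verts G) (verts (graph_copy i G))"
    by (simp add: graph_copy_eq_map_graph bij_betw_def)
  then have "charpoly_on (verts (graph_copy i G)) (laplacian (graph_copy i G)) =
      charpoly_on (verts G) (\<lambda>u v. laplacian (map_graph (Pair i) G) (i, u) (i, v))"
    by (simp add: charpoly_on_bij_betw simple_graph_finite[OF simple] graph_copy_eq_map_graph)
  also have "\<dots> = charpoly_on (verts G) (laplacian G)"
    by (rule charpoly_on_cong) (rule laplacian_map_graph[OF inj simple])
  finally show ?thesis
    by (simp add: lap_spectrum_def)
qed

text \<open>The Laplacian characteristic polynomial with the factor \<open>x\<close> of the eigenvalue \<open>0\<close>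
  removed, computed by subtracting the row of \<open>v0\<close> from all other rows.\<close>

definition reduced_laplacian_charpoly :: "'a graph \<Rightarrow> 'a \<Rightarrow> real poly" where
  "reduced_laplacian_charpoly G v0 =
     charpoly_on (verts G - {v0}) (\<lambda>u v. laplacian G u v - laplacian G v0 v)"

lemma charpoly_laplacian_eq_reduced:
  assumes "simple_graph G" and "v0 \<in> verts G"
  shows "charpoly_on (verts G) (laplacian G) = [:0, 1:] * reduced_laplacian_charpoly G v0"
  using charpoly_on_const_row_sums[OF simple_graph_finite[OF assms(1)] assms(2)]
    laplacian_row_sum[OF assms(1)]
  by (simp add: reduced_laplacian_charpoly_def)

lemma proots_reduced_laplacian_charpoly:
  assumes "simple_graph G" and "v0 \<in> verts G"
  shows "proots (reduced_laplacian_charpoly G v0) = lap_spectrum G - {#0#}"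
proof -
  have "reduced_laplacian_charpoly G v0 \<noteq> 0"
    using charpoly_on_nonzero[OF simple_graph_finite[OF assms(1)]] charpoly_laplacian_eq_reduced[OF assms]
    by auto
  then have "lap_spectrum G = {#0#} + proots (reduced_laplacian_charpoly G v0)"
    unfolding lap_spectrum_def charpoly_laplacian_eq_reduced[OF assms]
    by (subst proots_mult) auto
  then show ?thesis
    by simp
qed

lemma charpoly_laplacian_plus_scalar_plus_ones:
  assumes simple: "simple_graph G" and v0: "v0 \<in> verts G"
  shows "charpoly_on (verts G) (\<lambda>u v. laplacian G u v + (if u = v then c else 0) + 1) =
    [:-(c + real (card (verts G))), 1:] * pcompose (reduced_laplacian_charpoly G v0) [:-c, 1:]"
proof -
  let ?M = "\<lambda>u v. laplacian G u v + (if u = v then c else 0) + 1"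
  have fin: "finite (verts G)"
    by (rule simple_graph_finite[OF simple])
  have "(\<Sum>v\<in>verts G. ?M u v) = c + real (card (verts G))" if "u \<in> verts G" for u
    using that fin laplacian_row_sum[OF simple that] by (simp add: sum.distrib)
  then have "charpoly_on (verts G) ?M =
      [:-(c + real (card (verts G))), 1:] * charpoly_on (verts G - {v0}) (\<lambda>u v. ?M u v - ?M v0 v)"
    by (rule charpoly_on_const_row_sums[OF fin v0])
  also have "charpoly_on (verts G - {v0}) (\<lambda>u v. ?M u v - ?M v0 v) = charpoly_on (verts G - {v0})
      (\<lambda>u v. (laplacian G u v - laplacian G v0 v) + (if u = v then c else 0))"
    by (intro charpoly_on_cong) auto
  finally show ?thesis
    by (simp add: charpoly_on_shift reduced_laplacian_charpoly_def)
qed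

context disjoint_simple_graphs
begin

lemma laplacian_graph_join_left:
  assumes "u \<in> verts A" and "v \<in> verts A"
  shows "laplacian (graph_join A B) u v = laplacian A u v + (if u = v then real (card (verts B)) else 0)"
proof -
  have "degree (graph_join A B) u = degree A u + card (verts B)"
    unfolding degree_def nbhd_graph_join_left[OF assms(1)]
    using disjoint nbhd_subset_verts[of A u] finite_A finite_B
    by (intro card_Un_disjoint) (auto intro: finite_subset)
  then show ?thesis
    using adj_graph_join_left[OF assms] by (cases "u = v") (simp_all add: laplacian_def)
qed

lemma laplacian_graph_join_across:
  "u \<in> verts A \<Longrightarrow> v \<in> verts B \<Longrightarrow> laplacian (graph_join A B) u v = -1"
  using disjoint by (auto simp: laplacian_def adj_graph_join)

text \<open>Subtracting the row of \<open>a0\<close> from all others leaves a block triangular matrix: the rows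
  of \<open>A - {a0}\<close> vanish on the columns of \<open>B\<close>, and the block on \<open>B\<close> is \<open>L(B) + |A| I + J\<close>.\<close>

lemma charpoly_laplacian_join:
  assumes a0: "a0 \<in> verts A" and b0: "b0 \<in> verts B"
  defines "a \<equiv> real (card (verts A))" and "b \<equiv> real (card (verts B))"
  shows "charpoly_on (verts (graph_join A B)) (laplacian (graph_join A B)) =
    [:0, 1:] * [:-(a + b), 1:] * pcompose (reduced_laplacian_charpoly A a0) [:-b, 1:]
      * pcompose (reduced_laplacian_charpoly B b0) [:-a, 1:]"
proof -
  interpret swapped: disjoint_simple_graphs B A by (rule swap)
  let ?L = "laplacian (graph_join A B)"
  define M where "M = (\<lambda>u v. ?L u v - ?L a0 v)"
  have JBA: "graph_join B A = graph_join A B"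
    by (rule graph_join_commute)
  have LBB: "?L u v = laplacian B u v + (if u = v then a else 0)" if "u \<in> verts B" "v \<in> verts B" for u v
    using swapped.laplacian_graph_join_left[OF that] JBA by (simp add: a_def)
  have a0B: "a0 \<notin> verts B"
    using a0 disjoint by blast
  have "charpoly_on (verts (graph_join A B)) ?L = [:-0, 1:] * charpoly_on (verts (graph_join A B) - {a0}) M"
    unfolding M_def using a0 simple_graph_join
    by (intro charpoly_on_const_row_sums laplacian_row_sum simple_graph_finite) (auto simp: verts_graph_join)
  also have "verts (graph_join A B) - {a0} = verts B \<union> (verts A - {a0})"
    using a0B by (auto simp: verts_graph_join)
  also have "charpoly_on (verts B \<union> (verts A - {a0})) M =
      charpoly_on (verts B) M * charpoly_on (verts A - {a0}) M"
    using finite_A finite_B disjoint a0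
    by (intro charpoly_on_Un_block_triangular) (auto simp: M_def laplacian_graph_join_across)
  also have "charpoly_on (verts A - {a0}) M = pcompose (reduced_laplacian_charpoly A a0) [:-b, 1:]"
  proof -
    have "charpoly_on (verts A - {a0}) M = charpoly_on (verts A - {a0})
        (\<lambda>u v. (laplacian A u v - laplacian A a0 v) + (if u = v then b else 0))"
      using a0 by (intro charpoly_on_cong) (auto simp: M_def laplacian_graph_join_left b_def)
    then show ?thesis
      by (simp add: charpoly_on_shift reduced_laplacian_charpoly_def)
  qed
  also have "charpoly_on (verts B) M =
      [:-(a + b), 1:] * pcompose (reduced_laplacian_charpoly B b0) [:-a, 1:]"
  proof -
    have "charpoly_on (verts B) M =
        charpoly_on (verts B) (\<lambda>u v. laplacian B u v + (if u = v then a else 0) + 1)"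
      using a0 by (intro charpoly_on_cong) (simp add: M_def LBB laplacian_graph_join_across)
    then show ?thesis
      using charpoly_laplacian_plus_scalar_plus_ones[OF simple_B b0, of a] by (simp add: b_def add.commute)
  qed
  finally show ?thesis
    by (simp only: ac_simps minus_zero)
qed

lemma lap_spectrum_join:
  assumes "verts A \<noteq> {}" and "verts B \<noteq> {}"
  defines "a \<equiv> real (card (verts A))" and "b \<equiv> real (card (verts B))"
  shows "lap_spectrum (graph_join A B) = {#0, a + b#}
    + image_mset (\<lambda>x. x + b) (lap_spectrum A - {#0#}) + image_mset (\<lambda>x. x + a) (lap_spectrum B - {#0#})"
proof -
  obtain a0 b0 where a0: "a0 \<in> verts A" and b0: "b0 \<in> verts B"
    using assms by blast
  let ?p = "pcompose (reduced_laplacian_charpoly A a0) [:-b, 1:]"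
  let ?q = "pcompose (reduced_laplacian_charpoly B b0) [:-a, 1:]"
  have nonzero: "reduced_laplacian_charpoly A a0 \<noteq> 0" "reduced_laplacian_charpoly B b0 \<noteq> 0"
    using finite_A finite_B by (simp_all add: reduced_laplacian_charpoly_def charpoly_on_nonzero)
  then have "?p \<noteq> 0" and "?q \<noteq> 0"
    by (simp_all add: pcompose_eq_0_iff)
  define X where "X = [:0, 1:] * [:-(a + b), 1:]"
  have "proots X = {#0, a + b#}"
    unfolding X_def by (subst proots_mult) auto
  moreover have "X \<noteq> 0"
    by (simp add: X_def)
  moreover have "charpoly_on (verts (graph_join A B)) (laplacian (graph_join A B)) = X * ?p * ?q"
    unfolding X_def a_def b_def by (rule charpoly_laplacian_join[OF a0 b0])
  ultimately have "lap_spectrum (graph_join A B) = {#0, a + b#} + proots ?p + proots ?q"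
    using \<open>?p \<noteq> 0\<close> \<open>?q \<noteq> 0\<close> by (simp add: lap_spectrum_def proots_mult)
  then show ?thesis
    using proots_reduced_laplacian_charpoly[OF simple_A a0] proots_reduced_laplacian_charpoly[OF simple_B b0]
    by (simp add: proots_pcompose_shift nonzero)
qed

end

lemma lap_spectrum_iter_join_eq:
  assumes simple: "simple_graph G" "simple_graph H" and nonempty: "verts G \<noteq> {}" "verts H \<noteq> {}"
    and card: "card (verts G) = card (verts H)" and spectrum: "lap_spectrum G = lap_spectrum H"
  shows "lap_spectrum (iter_join k G) = lap_spectrum (iter_join k H)"
proof (induction k)
  case 0
  then show ?case
    using spectrum by (simp add: lap_spectrum_graph_copy simple)
next
  case (Suc k)
  have step: "lap_spectrum (iter_join (Suc k) F) = {#0, real (Suc k * card (verts F)) + real (card (verts F))#}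
      + image_mset (\<lambda>x. x + real (card (verts F))) (lap_spectrum (iter_join k F) - {#0#})
      + image_mset (\<lambda>x. x + real (Suc k * card (verts F))) (lap_spectrum F - {#0#})"
    if "simple_graph F" "verts F \<noteq> {}" for F :: "'c graph"
  proof -
    interpret disjoint_simple_graphs "iter_join k F" "graph_copy (Suc k) F"
      using that by (simp add: disjoint_simple_graphs_iter_join simple_graph_iter_join)
    show ?thesis
      using lap_spectrum_join that
      by (simp add: verts_iter_join verts_graph_copy card_verts_iter_join card_verts_graph_copy
          lap_spectrum_graph_copy simple_graph_finite)
  qed
  show ?case
    using step[OF simple(1) nonempty(1)] step[OF simple(2) nonempty(2)] Suc.IH card spectrum by simp
qed

theorem theorem4p6:
  fixes G :: "'a graph" and H :: "'b graph" and n :: nat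
  assumes "connected_graph G" and "connected_graph H"
    and "card (verts G) = n" and "card (verts H) = n"
    and "lap_spectrum G = lap_spectrum H"
  shows "(Z G \<noteq> Z H \<longrightarrow> (\<forall>k\<ge>1. lap_spectrum (iter_join k G) = lap_spectrum (iter_join k H)
                                 \<and> Z (iter_join k G) \<noteq> Z (iter_join k H)))
       \<and> (Zskew G \<noteq> Zskew H \<longrightarrow> (\<forall>k\<ge>1. lap_spectrum (iter_join k G) = lap_spectrum (iter_join k H)
                                 \<and> Zskew (iter_join k G) \<noteq> Zskew (iter_join k H)))"
proof -
  have simple: "simple_graph G" "simple_graph H" and nonempty: "verts G \<noteq> {}" "verts H \<noteq> {}"
    using assms(1,2) by (simp_all add: connected_graph_def)
  have spectra: "lap_spectrum (iter_join k G) = lap_spectrum (iter_join k H)" for k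
    using lap_spectrum_iter_join_eq[OF simple nonempty] assms(3-5) by simp
  have forcing: "forcing_number skew (iter_join k G) \<noteq> forcing_number skew (iter_join k H)"
    if differ: "forcing_number skew G \<noteq> forcing_number skew H" for skew k
  proof -
    have "n \<noteq> 1"
      using differ forcing_number_singleton[OF simple(1)] forcing_number_singleton[OF simple(2)]
        assms(3,4) by (metis card_1_singletonE)
    moreover have "n \<noteq> 0"
      using nonempty simple assms(3) by (auto simp: simple_graph_finite)
    ultimately have "2 \<le> n"
      by linarith
    then have "no_isolated_vertices G" and "no_isolated_vertices H"
      using connected_graph_no_isolated_vertices[OF assms(1)]
        connected_graph_no_isolated_vertices[OF assms(2)] assms(3,4) by auto
    then show ?thesis
      using forcing_number_iter_join[OF simple(1)] forcing_number_iter_join[OF simple(2)]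
        differ assms(3,4) by simp
  qed
  show ?thesis
    using spectra forcing[of False] forcing[of True]
    unfolding Z_eq_forcing_number Zskew_eq_forcing_number by blast
qed

end
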